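(* Let $L\ge2$, $k\ge2$ be integers, $\kappa:\{1,\dots,k-1\}\times\mathbb{N}\to\{0,\dots,L-1\}$ a map, and $(a(n))_{n=0}^\infty$ an $(L,k,\kappa)$-TM sequence. Then the $(L,k,\kappa)$-TM sequence is $n$-period if and only if $(a(n))_{n=0}^\infty$ is a $k$-automatic sequence.
   Context: $\mathbb{N}$ is the set of non-negative integers. Let $a_0,\dots,a_{L-1}$ be pairwise distinct complex numbers and $f$ the map on $\{a_0,\dots,a_{L-1}\}$ with $f(a_i)=a_{i+1}$ (indices mod $L$), extended letterwise to words, with iterates $f^j$, $f^0=\mathrm{id}$. Define $A_0=a_0$, $A_{n+1}=A_n\,f^{\kappa(1,n)}(A_n)\cdots f^{\kappa(k-1,n)}(A_n)$ (concatenation); the limit infinite word, indexed from $0$, is the $(L,k,\kappa)$-TM sequence. It is called $n$-period if there exist integers $N\ge0$ and $t>0$ with $\kappa(s,n)=\kappa(s,n+t)$ for all $1\le s\le k-1$ and all $n\ge N$. The $k$-kernel of a sequence $(a(n))$ is the set of subsequences $(a(k^en+j))_{n=0}^\infty$ with $e\ge0$, $0\le j\le k^e-1$; the sequence is $k$-automatic if its $k$-kernel is finite. *)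

theory Defs
  imports Complex_Main
begin

definition tm_f :: "nat \<Rightarrow> (nat \<Rightarrow> complex) \<Rightarrow> complex \<Rightarrow> complex" where
  "tm_f L a x = a (((THE i. i < L \<and> a i = x) + 1) mod L)"

fun tm_A :: "nat \<Rightarrow> nat \<Rightarrow> (nat \<Rightarrow> nat \<Rightarrow> nat) \<Rightarrow> (nat \<Rightarrow> complex) \<Rightarrow> nat \<Rightarrow> complex list" where
  "tm_A L k \<kappa> a 0 = [a 0]"
| "tm_A L k \<kappa> a (Suc n) =
     tm_A L k \<kappa> a n @ concat (map (\<lambda>s. map ((tm_f L a) ^^ (\<kappa> s n)) (tm_A L k \<kappa> a n)) [1..<k])"

definition n_period :: "nat \<Rightarrow> (nat \<Rightarrow> nat \<Rightarrow> nat) \<Rightarrow> bool" where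
  "n_period k \<kappa> \<longleftrightarrow> (\<exists>N t. t > 0 \<and> (\<forall>s \<in> {1..k-1}. \<forall>n \<ge> N. \<kappa> s n = \<kappa> s (n + t)))"

definition k_kernel :: "nat \<Rightarrow> (nat \<Rightarrow> 'a) \<Rightarrow> (nat \<Rightarrow> 'a) set" where
  "k_kernel k x = {(\<lambda>n. x (k ^ e * n + j)) | e j. j < k ^ e}"

definition k_automatic :: "nat \<Rightarrow> (nat \<Rightarrow> 'a) \<Rightarrow> bool" where
  "k_automatic k x \<longleftrightarrow> finite (k_kernel k x)"

end

theory Submission
  imports Defs
begin

text \<open>Since f shifts the index of a letter by one (mod L), the m-th letter of the TM sequence is
  a (c mod L), where c sums \<kappa>(d_i, i) over the nonzero base-k digits d_i of m. The kernel element
  n \<mapsto> a(k^e n + j) therefore only depends on c(j) mod L and on the shifted digit sum starting at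
  position e. If \<kappa> is eventually periodic, these shifted sums take finitely many values, so the
  kernel is finite. Conversely, a finite kernel forces two of the sequences n \<mapsto> a(k^e n) to
  coincide; evaluating them at s k^i recovers \<kappa>(s, e + i), which is therefore periodic.\<close>

text \<open>The guard k < 2 only serves termination; the argument p is the position of the lowest digit.\<close>

function kappa_digit_sum :: "nat \<Rightarrow> (nat \<Rightarrow> nat \<Rightarrow> nat) \<Rightarrow> nat \<Rightarrow> nat \<Rightarrow> nat" where
  "kappa_digit_sum k \<kappa> p m =
     (if m = 0 \<or> k < 2 then 0
      else (if m mod k = 0 then 0 else \<kappa> (m mod k) p) + kappa_digit_sum k \<kappa> (Suc p) (m div k))"
  by auto
termination by (relation "measure (\<lambda>(k, \<kappa>, p, m). m)") auto

declare kappa_digit_sum.simps [simp del]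

lemma kappa_digit_sum_0 [simp]: "kappa_digit_sum k \<kappa> p 0 = 0"
  by (simp add: kappa_digit_sum.simps)

lemma kappa_digit_sum_step:
  "k \<ge> 2 \<Longrightarrow> kappa_digit_sum k \<kappa> p m =
     (if m mod k = 0 then 0 else \<kappa> (m mod k) p) + kappa_digit_sum k \<kappa> (Suc p) (m div k)"
  by (cases "m = 0") (auto simp: kappa_digit_sum.simps[of k \<kappa> p m])

lemma kappa_digit_sum_digit:
  "k \<ge> 2 \<Longrightarrow> 0 < s \<Longrightarrow> s < k \<Longrightarrow> kappa_digit_sum k \<kappa> p s = \<kappa> s p"
  using kappa_digit_sum_step[of k \<kappa> p s] by simp

lemma kappa_digit_sum_split:
  assumes "k \<ge> 2" "j < k ^ e"
  shows "kappa_digit_sum k \<kappa> p (k ^ e * n + j) = kappa_digit_sum k \<kappa> p j + kappa_digit_sum k \<kappa> (p + e) n"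
  using assms(2)
proof (induction e arbitrary: p j)
  case 0
  then show ?case by simp
next
  case (Suc e)
  have "j div k < k ^ e"
    using Suc.prems assms(1) by (simp add: div_less_iff_less_mult mult.commute)
  have "kappa_digit_sum k \<kappa> p (k ^ Suc e * n + j)
      = (if j mod k = 0 then 0 else \<kappa> (j mod k) p) + kappa_digit_sum k \<kappa> (Suc p) (k ^ e * n + j div k)"
    using kappa_digit_sum_step[OF assms(1), of \<kappa> p "k ^ Suc e * n + j"] assms(1)
    by (simp add: mult.assoc)
  also have "\<dots> = kappa_digit_sum k \<kappa> p j + kappa_digit_sum k \<kappa> (p + Suc e) n"
    using Suc.IH[OF \<open>j div k < k ^ e\<close>, of "Suc p"] kappa_digit_sum_step[OF assms(1), of \<kappa> p j] by simp
  finally show ?case .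
qed

lemma kappa_digit_sum_shift_periodic:
  assumes "k \<ge> 2" and per: "\<forall>s \<in> {1..k-1}. \<forall>n \<ge> N. \<kappa> s n = \<kappa> s (n + t)" and "p \<ge> N"
  shows "kappa_digit_sum k \<kappa> (p + t) m = kappa_digit_sum k \<kappa> p m"
  using assms(3)
proof (induction m arbitrary: p rule: less_induct)
  case (less m)
  show ?case
  proof (cases "m = 0")
    case False
    have digit_eq: "(if m mod k = 0 then 0 else \<kappa> (m mod k) (p + t)) = (if m mod k = 0 then 0 else \<kappa> (m mod k) p)"
    proof (cases "m mod k = 0")
      case False
      have "m mod k < k" using assms(1) by simp
      then have "m mod k \<in> {1..k-1}" using False by simp
      then show ?thesis using per[rule_format, OF _ less.prems] False by simp
    qed simp
    have "m div k < m" using False assms(1) by simp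
    then have "kappa_digit_sum k \<kappa> (Suc p + t) (m div k) = kappa_digit_sum k \<kappa> (Suc p) (m div k)"
      using less.IH[of "m div k" "Suc p"] less.prems by simp
    then show ?thesis
      using digit_eq kappa_digit_sum_step[OF assms(1), of \<kappa> "p + t" m] kappa_digit_sum_step[OF assms(1), of \<kappa> p m]
      by simp
  qed simp
qed

lemma finite_range_kappa_digit_sum:
  assumes "k \<ge> 2" "n_period k \<kappa>"
  shows "finite (range (kappa_digit_sum k \<kappa>))"
proof -
  obtain N t where "t > 0" and per: "\<forall>s \<in> {1..k-1}. \<forall>n \<ge> N. \<kappa> s n = \<kappa> s (n + t)"
    using assms(2) unfolding n_period_def by blast
  have shift: "kappa_digit_sum k \<kappa> (p + i * t) = kappa_digit_sum k \<kappa> p" if "p \<ge> N" for p i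
  proof (induction i)
    case (Suc i)
    have "kappa_digit_sum k \<kappa> (p + Suc i * t) = kappa_digit_sum k \<kappa> ((p + i * t) + t)"
      by (simp add: ac_simps)
    also have "\<dots> = kappa_digit_sum k \<kappa> (p + i * t)"
      using kappa_digit_sum_shift_periodic[OF assms(1) per] that by (intro ext) simp
    finally show ?case using Suc by simp
  qed simp
  have "kappa_digit_sum k \<kappa> p \<in> kappa_digit_sum k \<kappa> ` {..<N + t}" for p
  proof (cases "p < N")
    case False
    then have "p = (N + (p - N) mod t) + ((p - N) div t) * t"
      using mod_div_mult_eq[of "p - N" t] by linarith
    then have "kappa_digit_sum k \<kappa> p = kappa_digit_sum k \<kappa> (N + (p - N) mod t)"
      using shift[of "N + (p - N) mod t" "(p - N) div t"] by (metis le_add1)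
    moreover have "N + (p - N) mod t < N + t" using \<open>t > 0\<close> by simp
    ultimately show ?thesis by blast
  qed simp
  then have "range (kappa_digit_sum k \<kappa>) \<subseteq> kappa_digit_sum k \<kappa> ` {..<N + t}"
    by blast
  then show ?thesis
    by (rule finite_subset) simp
qed

lemma concat_map_upt_blocks:
  "a \<le> b \<Longrightarrow> concat (map (\<lambda>s. map (\<lambda>r. g (l * s + r)) [0..<l]) [a..<b]) = map g [l * a..<l * b]"
proof (induction b)
  case (Suc b)
  show ?case
  proof (cases "a = Suc b")
    case False
    then have "a \<le> b" using Suc.prems by simp
    have "map (\<lambda>r. g (l * b + r)) [0..<l] = map g [l * b..<l * b + l]"
      by (simp add: map_add_upt[symmetric] add.commute comp_def)
    moreover have "map g [l * a..<l * b] @ map g [l * b..<l * b + l] = map g [l * a..<l * Suc b]"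
      using upt_add_eq_append[of "l * a" "l * b" l] \<open>a \<le> b\<close> by (simp add: add.commute flip: map_append)
    ultimately show ?thesis
      using Suc.IH[OF \<open>a \<le> b\<close>] \<open>a \<le> b\<close> by simp
  qed simp
qed simp

lemma tm_f_funpow:
  assumes "L > 0" "inj_on a {..<L}"
  shows "(tm_f L a ^^ j) (a (i mod L)) = a ((i + j) mod L)"
proof (induction j)
  case (Suc j)
  have "(THE i'. i' < L \<and> a i' = a ((i + j) mod L)) = (i + j) mod L"
    using assms by (auto intro!: the_equality dest: inj_onD)
  then show ?case using Suc by (simp add: tm_f_def mod_Suc_eq)
qed simp

definition tm_seq :: "nat \<Rightarrow> nat \<Rightarrow> (nat \<Rightarrow> nat \<Rightarrow> nat) \<Rightarrow> (nat \<Rightarrow> complex) \<Rightarrow> nat \<Rightarrow> complex" where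
  "tm_seq L k \<kappa> a m = a (kappa_digit_sum k \<kappa> 0 m mod L)"

lemma tm_A_eq_map_tm_seq:
  assumes "L > 0" "k \<ge> 2" "inj_on a {..<L}"
  shows "tm_A L k \<kappa> a n = map (tm_seq L k \<kappa> a) [0..<k ^ n]"
proof (induction n)
  case 0
  then show ?case by (simp add: tm_seq_def)
next
  case (Suc n)
  let ?X = "tm_seq L k \<kappa> a"
  have shifted: "(tm_f L a ^^ \<kappa> s n) (?X r) = ?X (k ^ n * s + r)" if "0 < s" "s < k" "r < k ^ n" for s r
    using tm_f_funpow[OF assms(1,3)] kappa_digit_sum_split[OF assms(2) \<open>r < k ^ n\<close>, of \<kappa> 0 s]
      kappa_digit_sum_digit[OF assms(2), of s \<kappa> n] that
    by (simp add: tm_seq_def)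
  have "concat (map (\<lambda>s. map (tm_f L a ^^ \<kappa> s n) (map ?X [0..<k ^ n])) [1..<k])
      = concat (map (\<lambda>s. map (\<lambda>r. ?X (k ^ n * s + r)) [0..<k ^ n]) [1..<k])"
    unfolding map_map comp_def by (intro arg_cong[where f = concat] map_cong refl) (simp add: shifted)
  also have "\<dots> = map ?X [k ^ n..<k ^ n * k]"
    using concat_map_upt_blocks[of 1 k ?X "k ^ n"] assms(2) by simp
  finally have "tm_A L k \<kappa> a (Suc n) = map ?X ([0..<k ^ n] @ [k ^ n..<k ^ n * k])"
    using Suc.IH by (simp del: upt_Suc)
  also have "[0..<k ^ n] @ [k ^ n..<k ^ n * k] = [0..<k ^ Suc n]"
    using upt_add_eq_append[of 0 "k ^ n" "k ^ n * k - k ^ n"] assms(2) by (simp add: mult.commute)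
  finally show ?case .
qed

lemma tm_seq_kernel:
  assumes "k \<ge> 2" "j < k ^ e"
  shows "tm_seq L k \<kappa> a (k ^ e * n + j) = a ((kappa_digit_sum k \<kappa> 0 j + kappa_digit_sum k \<kappa> e n) mod L)"
  using kappa_digit_sum_split[OF assms, of \<kappa> 0] by (simp add: tm_seq_def)

lemma k_automatic_tm_seq_if_n_period:
  assumes "L > 0" "k \<ge> 2" "n_period k \<kappa>"
  shows "k_automatic k (tm_seq L k \<kappa> a)"
proof -
  let ?seq = "\<lambda>(c, f). \<lambda>n. a ((c + f n) mod L)"
  have "k_kernel k (tm_seq L k \<kappa> a) \<subseteq> ?seq ` ({..<L} \<times> range (kappa_digit_sum k \<kappa>))"
  proof
    fix y assume "y \<in> k_kernel k (tm_seq L k \<kappa> a)"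
    then obtain e j where j: "j < k ^ e" and y: "y = (\<lambda>n. tm_seq L k \<kappa> a (k ^ e * n + j))"
      unfolding k_kernel_def by blast
    have "y = ?seq (kappa_digit_sum k \<kappa> 0 j mod L, kappa_digit_sum k \<kappa> e)"
      unfolding y tm_seq_kernel[OF assms(2) j] by (simp only: prod.case mod_add_left_eq)
    moreover have "(kappa_digit_sum k \<kappa> 0 j mod L, kappa_digit_sum k \<kappa> e) \<in> {..<L} \<times> range (kappa_digit_sum k \<kappa>)"
      using assms(1) by simp
    ultimately show "y \<in> ?seq ` ({..<L} \<times> range (kappa_digit_sum k \<kappa>))"
      by (rule image_eqI)
  qed
  moreover have "finite ({..<L} \<times> range (kappa_digit_sum k \<kappa>))"
    using finite_range_kappa_digit_sum[OF assms(2,3)] by simp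
  ultimately show ?thesis
    unfolding k_automatic_def by (rule finite_subset[OF _ finite_imageI])
qed

lemma finite_range_nat_repeats:
  fixes f :: "nat \<Rightarrow> 'a"
  assumes "finite (range f)"
  obtains e e' where "e < e'" "f e = f e'"
proof -
  have "\<not> inj f"
    using assms finite_imageD by blast
  then obtain e1 e2 where "e1 \<noteq> e2" "f e1 = f e2"
    unfolding inj_def by blast
  then show ?thesis
    using that by (cases "e1 < e2") (auto simp: not_less_iff_gr_or_eq)
qed

lemma n_period_if_k_automatic_tm_seq:
  assumes "k \<ge> 2" "inj_on a {..<L}" "\<forall>s \<in> {1..k-1}. \<forall>n. \<kappa> s n < L"
    and "k_automatic k (tm_seq L k \<kappa> a)"
  shows "n_period k \<kappa>"
proof -
  let ?K = "\<lambda>e n. tm_seq L k \<kappa> a (k ^ e * n)"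
  have "?K e \<in> k_kernel k (tm_seq L k \<kappa> a)" for e
    unfolding k_kernel_def using assms(1) by (intro CollectI exI[of _ e] exI[of _ 0]) simp
  then have "range ?K \<subseteq> k_kernel k (tm_seq L k \<kappa> a)"
    by (rule image_subsetI)
  then have "finite (range ?K)"
    using assms(4) unfolding k_automatic_def by (rule finite_subset)
  then obtain e e' where "e < e'" and same: "?K e = ?K e'"
    by (rule finite_range_nat_repeats)
  have at_digit: "tm_seq L k \<kappa> a (k ^ p * s) = a (\<kappa> s p)" if "s \<in> {1..k-1}" for s p
    using tm_seq_kernel[OF assms(1), of 0 p L \<kappa> a s] kappa_digit_sum_digit[OF assms(1), of s \<kappa> p]
      that assms(1,3) by auto
  have periodic: "\<kappa> s n = \<kappa> s (n + (e' - e))" if s: "s \<in> {1..k-1}" and "n \<ge> e" for s n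
  proof -
    have powers: "k ^ e * (s * k ^ (n - e)) = k ^ n * s" "k ^ e' * (s * k ^ (n - e)) = k ^ (n + (e' - e)) * s"
      using \<open>n \<ge> e\<close> \<open>e < e'\<close> by (simp_all add: mult.commute mult.left_commute add.commute flip: power_add)
    have "a (\<kappa> s n) = a (\<kappa> s (n + (e' - e)))"
      using fun_cong[OF same, of "s * k ^ (n - e)"] by (simp only: powers at_digit[OF s])
    then show ?thesis
      using assms(2,3) s by (auto dest: inj_onD)
  qed
  have "e' - e > 0" using \<open>e < e'\<close> by simp
  then show ?thesis
    unfolding n_period_def by (intro exI[of _ e] exI[of _ "e' - e"] conjI ballI allI impI periodic)
qed

theorem proposition5p1:
  fixes L k :: nat and \<kappa> :: "nat \<Rightarrow> nat \<Rightarrow> nat" and a :: "nat \<Rightarrow> complex"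
    and x :: "nat \<Rightarrow> complex"
  assumes "L \<ge> 2" and "k \<ge> 2"
    and "inj_on a {..<L}"
    and "\<forall>s \<in> {1..k-1}. \<forall>n. \<kappa> s n < L"
    and "\<forall>n m. m < length (tm_A L k \<kappa> a n) \<longrightarrow> x m = tm_A L k \<kappa> a n ! m"
  shows "n_period k \<kappa> \<longleftrightarrow> k_automatic k x"
proof -
  have "L > 0" using assms(1) by simp
  have "x = tm_seq L k \<kappa> a"
  proof
    fix m
    have "m < 2 ^ m" by simp
    also have "(2::nat) ^ m \<le> k ^ m" using assms(2) by (simp add: power_mono)
    finally show "x m = tm_seq L k \<kappa> a m"
      using assms(5) tm_A_eq_map_tm_seq[OF \<open>L > 0\<close> assms(2,3)] by simp
  qed
  then show ?thesis
    using k_automatic_tm_seq_if_n_period[OF \<open>L > 0\<close> assms(2)]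
      n_period_if_k_automatic_tm_seq[OF assms(2,3,4)] by blast
qed

end
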